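(* Let $r(t)\in\mathbb{Z}[t]$. The following are equivalent: (i) $\operatorname{Cong}(r(t)) = 0$; (ii) $r(0)=0$, or there exist $u\in\mathbb{N}$ and $s(t)\in\mathbb{Z}[t]\setminus\mathbb{Z}$ such that $s(t^{u+1})$ divides $r(t)$ in $\mathbb{Z}[t]$.
   Context: $\mathbb{N}=\{1,2,\dots\}$. For $r(t)=\sum_i a_it^i$ and integers $u>j\ge0$, $r_{u,j}(t):=\sum_{i\equiv j\bmod u}a_it^i$. $\operatorname{Cong}(r(t))$ is the non-negative generator of the ideal $\mathbb{Z}\cap\bigcap_{1<u\le\deg(r(t))+1}\big(r_{u,0}(t)\mathbb{Z}[t]+\cdots+r_{u,u-1}(t)\mathbb{Z}[t]\big)$ of $\mathbb{Z}$. *)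

theory Defs
  imports "HOL-Computational_Algebra.Polynomial"
begin

definition rpart :: "nat \<Rightarrow> nat \<Rightarrow> int poly \<Rightarrow> int poly" where
  "rpart u j r = (\<Sum>i\<le>degree r. if i mod u = j then monom (coeff r i) i else 0)"

definition part_ideal :: "nat \<Rightarrow> int poly \<Rightarrow> int poly set" where
  "part_ideal u r = {(\<Sum>j<u. rpart u j r * q j) | q. True}"

text \<open>The ideal Z \<inter> \<Inter>_{1<u\<le>deg r + 1} (...) of Z (constants identified with integers).\<close>
definition cong_ideal :: "int poly \<Rightarrow> int set" where
  "cong_ideal r = {c. \<forall>u\<in>{2..degree r + 1}. [:c:] \<in> part_ideal u r}"

text \<open>Cong(r): the non-negative generator of cong_ideal r.  Convention: Cong(0) = 0
  (the zero polynomial has degree -\<infinity>).\<close>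
definition Cong :: "int poly \<Rightarrow> int" where
  "Cong r = (if r = 0 then 0 else (THE g. 0 \<le> g \<and> cong_ideal r = {c. g dvd c}))"

end

theory Submission
  imports Defs "HOL-Computational_Algebra.Polynomial_Factorial"
begin

(* Fix u and let I be the ideal of Q[t] generated by the parts r_{u,j}. Since Q[t] is a PID and
   I is stable under taking parts, a generator m of I is supported on a single residue class of
   exponents mod u; if r(0) <> 0 then m divides r_{u,0} and so has a nonzero constant term, i.e.
   m = s(t^u) up to a scalar. Either m is constant, and clearing denominators gives a nonzero
   integer in the ideal of Z[t], or Gauss's lemma makes the primitive part s(t^u) of m a divisor
   of r. Conversely t (if r(0) = 0) or s(t^u) (if it divides r) divides every part, hence every
   element of the ideal, which then contains no nonzero constant. Finally Cong(r) <> 0 iff each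
   of the ideals for u = 2..deg r + 1 contains a nonzero constant: multiply these constants. *)

definition is_ideal :: "'a::comm_ring_1 set \<Rightarrow> bool" where
  "is_ideal I \<longleftrightarrow> 0 \<in> I \<and> (\<forall>x\<in>I. \<forall>y\<in>I. x + y \<in> I) \<and> (\<forall>x\<in>I. \<forall>z. z * x \<in> I)"

lemma is_ideal_principal:
  fixes I :: "'a::euclidean_ring set"
  assumes "is_ideal I"
  obtains g where "I = {x. g dvd x}"
proof (cases "I \<subseteq> {0}")
  case True
  with assms show ?thesis by (intro that[of 0]) (auto simp: is_ideal_def)
next
  case False
  then obtain g where g: "g \<in> I" "g \<noteq> 0"
    and min: "\<And>y. y \<in> I \<Longrightarrow> y \<noteq> 0 \<Longrightarrow> euclidean_size g \<le> euclidean_size y"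
    using ex_has_least_nat[of "\<lambda>y. y \<in> I \<and> y \<noteq> 0" _ euclidean_size] by blast
  have "g dvd x" if x: "x \<in> I" for x
  proof (rule ccontr)
    assume "\<not> g dvd x"
    have "x mod g = x + (- (x div g)) * g"
      by (simp flip: minus_div_mult_eq_mod)
    also have "\<dots> \<in> I" using assms x g(1) unfolding is_ideal_def by blast
    finally have "euclidean_size g \<le> euclidean_size (x mod g)"
      using \<open>\<not> g dvd x\<close> by (intro min) (auto simp: mod_eq_0_iff_dvd)
    with mod_size_less[OF g(2), of x] show False by simp
  qed
  moreover have "x \<in> I" if "g dvd x" for x
  proof -
    from that obtain k where "x = k * g" by (metis dvd_def mult.commute)
    with assms g(1) show ?thesis by (simp add: is_ideal_def)
  qed
  ultimately show ?thesis by (intro that) auto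
qed

definition generated_ideal :: "('b \<Rightarrow> 'a::comm_ring_1) \<Rightarrow> 'b set \<Rightarrow> 'a set" where
  "generated_ideal R A = {\<Sum>j\<in>A. R j * Q j | Q. True}"

lemma generated_idealI: "(\<Sum>j\<in>A. R j * Q j) \<in> generated_ideal R A"
  unfolding generated_ideal_def by (intro CollectI exI[of _ Q]) simp

lemma part_ideal_eq_generated_ideal: "part_ideal u r = generated_ideal (\<lambda>j. rpart u j r) {..<u}"
  unfolding part_ideal_def generated_ideal_def ..

lemma is_ideal_generated_ideal: "is_ideal (generated_ideal R A)"
  unfolding is_ideal_def generated_ideal_def
proof safe
  show "\<exists>Q. 0 = (\<Sum>j\<in>A. R j * Q j) \<and> True"
    by (intro exI[of _ "\<lambda>_. 0"]) simp
  show "\<exists>Q''. (\<Sum>j\<in>A. R j * Q j) + (\<Sum>j\<in>A. R j * Q' j) = (\<Sum>j\<in>A. R j * Q'' j) \<and> True" for Q Q'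
    by (intro exI[of _ "\<lambda>j. Q j + Q' j"]) (simp add: sum.distrib distrib_left)
  show "\<exists>Q'. z * (\<Sum>j\<in>A. R j * Q j) = (\<Sum>j\<in>A. R j * Q' j) \<and> True" for Q z
    by (intro exI[of _ "\<lambda>j. z * Q j"]) (simp add: sum_distrib_left ac_simps)
qed

lemma generator_in_generated_ideal:
  assumes "finite A" "i \<in> A"
  shows "R i \<in> generated_ideal R A"
proof -
  have "R i = (\<Sum>j\<in>A. R j * (if j = i then 1 else 0))"
    using assms by (simp add: if_distrib sum.delta' cong: if_cong)
  then show ?thesis by (metis generated_idealI)
qed

lemma dvd_generated_ideal:
  assumes "\<And>j. j \<in> A \<Longrightarrow> g dvd R j" "x \<in> generated_ideal R A"
  shows "g dvd x"
  using assms unfolding generated_ideal_def by (auto intro!: dvd_sum)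

lemma smult_sum_right: "smult a (sum f A) = (\<Sum>x\<in>A. smult a (f x))"
  by (induct A rule: infinite_finite_induct) (simp_all add: smult_add_right)

lemma fract_poly_sum: "fract_poly (sum f A) = (\<Sum>x\<in>A. fract_poly (f x))"
  by (induct A rule: infinite_finite_induct) simp_all

lemma fract_poly_clear_denominator:
  fixes p :: "int fract poly"
  obtains d q where "d \<noteq> 0" "smult (to_fract d) p = fract_poly q"
proof -
  obtain c p' where p: "p = smult c (fract_poly p')" by (rule content_decompose_fract)
  obtain a b where c: "c = Fract a b" "b \<noteq> 0" by (cases c)
  have "to_fract b * c = to_fract a" using c by (simp add: to_fract_def eq_fract)
  then have "smult (to_fract b) p = fract_poly (smult a p')" unfolding p by simp
  with c(2) show ?thesis by (rule that)
qed

lemma generated_ideal_fract_poly_clear_denominators: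
  fixes R :: "'b \<Rightarrow> int poly"
  assumes "finite A" "x \<in> generated_ideal (\<lambda>j. fract_poly (R j)) A"
  obtains d y where "d \<noteq> 0" "y \<in> generated_ideal R A" "smult (to_fract d) x = fract_poly y"
proof -
  obtain Q where x: "x = (\<Sum>j\<in>A. fract_poly (R j) * Q j)"
    using assms(2) unfolding generated_ideal_def by blast
  have "\<forall>j. \<exists>d q. d \<noteq> 0 \<and> smult (to_fract d) (Q j) = fract_poly q"
    by (meson fract_poly_clear_denominator)
  then obtain D q where Dq: "\<And>j. D j \<noteq> 0" "\<And>j. smult (to_fract (D j)) (Q j) = fract_poly (q j)"
    by metis
  define d where "d = (\<Prod>j\<in>A. D j)"
  have "smult (to_fract d) (Q j) = fract_poly (smult (d div D j) (q j))" if "j \<in> A" for j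
  proof -
    have "d = (d div D j) * D j" using dvd_prodI[OF assms(1) that, of D] Dq(1)
      by (simp add: d_def)
    then have "smult (to_fract d) (Q j) = smult (to_fract (d div D j)) (smult (to_fract (D j)) (Q j))"
      by (metis smult_smult to_fract_mult)
    then show ?thesis by (simp add: Dq(2))
  qed
  then have "smult (to_fract d) x = fract_poly (\<Sum>j\<in>A. R j * smult (d div D j) (q j))"
    unfolding x smult_sum_right fract_poly_sum by (intro sum.cong) (simp_all flip: mult_smult_right)
  moreover have "d \<noteq> 0" using Dq(1) assms(1) by (simp add: d_def)
  ultimately show ?thesis by (metis that generated_idealI)
qed

(* rpart for arbitrary coefficients, needed over the fraction field of int *)
definition mod_part :: "nat \<Rightarrow> nat \<Rightarrow> 'a::comm_monoid_add poly \<Rightarrow> 'a poly" where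
  "mod_part u j p = (\<Sum>i\<le>degree p. if i mod u = j then monom (coeff p i) i else 0)"

lemma rpart_eq_mod_part: "rpart u j r = mod_part u j r"
  unfolding rpart_def mod_part_def ..

lemma coeff_mod_part: "coeff (mod_part u j p) n = (if n mod u = j then coeff p n else 0)"
proof -
  have "mod_part u j p = (\<Sum>i\<le>degree p. monom (if i mod u = j then coeff p i else 0) i)"
    unfolding mod_part_def by (intro sum.cong) auto
  then show ?thesis
    by (cases "n \<le> degree p") (auto simp: coeff_sum_monom coeff_sum coeff_monom coeff_eq_0)
qed

lemma mod_part_sum: "mod_part u j (sum f A) = (\<Sum>x\<in>A. mod_part u j (f x))"
  by (rule poly_eqI) (auto simp: coeff_mod_part coeff_sum)

lemma sum_mod_part: "u > 0 \<Longrightarrow> (\<Sum>j<u. mod_part u j p) = p"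
  by (rule poly_eqI) (simp add: coeff_sum coeff_mod_part sum.delta)

definition mod_homogeneous :: "nat \<Rightarrow> nat \<Rightarrow> 'a::zero poly \<Rightarrow> bool" where
  "mod_homogeneous u j p \<longleftrightarrow> (\<forall>n. coeff p n \<noteq> 0 \<longrightarrow> n mod u = j)"

lemma mod_homogeneous_mod_part: "mod_homogeneous u j (mod_part u j p)"
  by (simp add: mod_homogeneous_def coeff_mod_part)

lemma mod_part_mod_homogeneous:
  "mod_homogeneous u j p \<Longrightarrow> mod_part u k p = (if j = k then p else 0)"
  by (rule poly_eqI) (auto simp: coeff_mod_part mod_homogeneous_def)

lemma mod_homogeneous_mult:
  assumes "mod_homogeneous u j a" "mod_homogeneous u l b"
  shows "mod_homogeneous u ((j + l) mod u) (a * b)"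
  unfolding mod_homogeneous_def
proof (intro allI impI)
  fix n assume "coeff (a * b) n \<noteq> 0"
  then obtain i where "i \<le> n" "coeff a i * coeff b (n - i) \<noteq> 0"
    unfolding coeff_mult by (rule sum.not_neutral_contains_not_neutral) simp
  then have "coeff a i \<noteq> 0" "coeff b (n - i) \<noteq> 0" by auto
  with assms \<open>i \<le> n\<close> have "n = i + (n - i)" "i mod u = j" "(n - i) mod u = l"
    unfolding mod_homogeneous_def by auto
  then show "n mod u = (j + l) mod u" by (metis mod_add_eq)
qed

lemma mod_part_mult_mod_homogeneous:
  assumes u: "u > 0" and a: "mod_homogeneous u j a" and l: "l < u" and k: "(j + l) mod u = k"
  shows "mod_part u k (a * b) = a * mod_part u l b"
proof -
  have "mod_part u k (a * b) = mod_part u k (\<Sum>i<u. a * mod_part u i b)"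
    by (simp only: sum_mod_part[OF u] flip: sum_distrib_left)
  also have "\<dots> = (\<Sum>i<u. mod_part u k (a * mod_part u i b))"
    by (rule mod_part_sum)
  also have "\<dots> = (\<Sum>i<u. if i = l then a * mod_part u i b else 0)"
  proof (intro sum.cong refl)
    fix i assume "i \<in> {..<u}"
    moreover have "(j + i) mod u = (j + l) mod u \<longleftrightarrow> i mod u = l mod u"
      by (simp add: nat_mod_eq_iff)
    ultimately have "(j + i) mod u = k \<longleftrightarrow> i = l"
      using k l by simp
    then show "mod_part u k (a * mod_part u i b) = (if i = l then a * mod_part u i b else 0)"
      using mod_part_mod_homogeneous[OF mod_homogeneous_mult[OF a mod_homogeneous_mod_part]] by auto
  qed
  also have "\<dots> = a * mod_part u l b" using l by (simp add: sum.delta')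
  finally show ?thesis .
qed

lemma generated_ideal_mod_part:
  assumes u: "u > 0" and k: "k < u" and R: "\<And>j. j < u \<Longrightarrow> mod_homogeneous u j (R j)"
    and x: "x \<in> generated_ideal R {..<u}"
  shows "mod_part u k x \<in> generated_ideal R {..<u}"
proof -
  obtain Q where x: "x = (\<Sum>j<u. R j * Q j)" using x unfolding generated_ideal_def by blast
  have "mod_part u k (R j * Q j) = R j * mod_part u ((u + k - j) mod u) (Q j)" if "j < u" for j
    using u k that by (intro mod_part_mult_mod_homogeneous[OF u R]) (simp_all add: mod_add_right_eq)
  then have "mod_part u k x = (\<Sum>j<u. R j * mod_part u ((u + k - j) mod u) (Q j))"
    unfolding x mod_part_sum by simp
  then show ?thesis by (simp add: generated_idealI)
qed

lemma mod_homogeneous_if_dvd_mod_part: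
  fixes m :: "'a::idom poly"
  assumes "m dvd mod_part u (degree m mod u) m"
  shows "mod_homogeneous u (degree m mod u) m"
proof -
  define d where "d = m - mod_part u (degree m mod u) m"
  have "coeff d n = 0" if "n \<ge> degree m" for n
    using that by (cases "n = degree m") (auto simp: d_def coeff_mod_part coeff_eq_0)
  moreover have "m dvd d" using assms by (simp add: d_def)
  ultimately have "d = 0" by (metis dvd_imp_degree_le leading_coeff_0_iff)
  then have "mod_part u (degree m mod u) m = m" by (simp add: d_def)
  then show ?thesis by (metis mod_homogeneous_mod_part)
qed

lemma pcompose_monom: "pcompose (monom c n) q = smult c (q ^ n)"
  by (induct n) (simp_all add: monom_0 monom_Suc pcompose_pCons)

lemma coeff_pcompose_monom:
  fixes s :: "'a::comm_ring_1 poly"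
  assumes u: "u > 0"
  shows "coeff (pcompose s (monom 1 u)) n = (if u dvd n then coeff s (n div u) else 0)"
proof -
  have "pcompose s (monom 1 u) = (\<Sum>i\<le>degree s. monom (coeff s i) (u * i))"
    by (subst (1) poly_as_sum_of_monoms[symmetric])
      (simp add: pcompose_sum pcompose_monom monom_power smult_monom)
  then have "coeff (pcompose s (monom 1 u)) n = (\<Sum>i\<le>degree s. if i = n div u \<and> u dvd n then coeff s i else 0)"
    using u by (auto simp: coeff_sum intro!: sum.cong)
  also have "\<dots> = (if u dvd n then coeff s (n div u) else 0)"
    by (auto simp: sum.delta' coeff_eq_0)
  finally show ?thesis .
qed

lemma mod_homogeneous_0_iff_pcompose_monom:
  fixes p :: "'a::comm_ring_1 poly"
  assumes u: "u > 0"
  shows "mod_homogeneous u 0 p \<longleftrightarrow> (\<exists>s. p = pcompose s (monom 1 u))"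
proof
  assume hom: "mod_homogeneous u 0 p"
  define s where "s = Abs_poly (\<lambda>i. coeff p (i * u))"
  have "coeff s = (\<lambda>i. coeff p (i * u))"
    unfolding s_def using u by (intro coeff_Abs_poly[of "degree p"] coeff_eq_0) (simp add: less_le_trans)
  then have "p = pcompose s (monom 1 u)"
    using hom u by (intro poly_eqI) (auto simp: coeff_pcompose_monom mod_homogeneous_def)
  then show "\<exists>s. p = pcompose s (monom 1 u)" ..
qed (auto simp: mod_homogeneous_def coeff_pcompose_monom[OF u] split: if_splits)

lemma part_ideal_const_eq_0_if_common_divisor:
  fixes g r :: "int poly"
  assumes "degree g \<noteq> 0" "\<And>j. j < u \<Longrightarrow> g dvd rpart u j r" "[:c:] \<in> part_ideal u r"
  shows "c = 0"
proof (rule ccontr)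
  assume "c \<noteq> 0"
  have "g dvd [:c:]"
    using assms(2,3) unfolding part_ideal_eq_generated_ideal by (rule dvd_generated_ideal) simp
  then have "degree g \<le> degree [:c:]" using \<open>c \<noteq> 0\<close> by (intro dvd_imp_degree_le) auto
  with assms(1) show False by simp
qed

lemma x_dvd_rpart: "poly r 0 = 0 \<Longrightarrow> [:0, 1:] dvd rpart u j r"
  using poly_eq_0_iff_dvd[of "rpart u j r" 0]
  by (cases "j = 0") (simp_all add: poly_0_coeff_0 rpart_eq_mod_part coeff_mod_part)

lemma pcompose_monom_dvd_rpart:
  assumes u: "u > 0" and j: "j < u" and dvd: "pcompose s (monom 1 u) dvd r"
  shows "pcompose s (monom 1 u) dvd rpart u j r"
proof -
  obtain w where "r = pcompose s (monom 1 u) * w" using dvd ..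
  moreover have "mod_homogeneous u 0 (pcompose s (monom 1 u))"
    using mod_homogeneous_0_iff_pcompose_monom[OF u] by blast
  ultimately have "rpart u j r = pcompose s (monom 1 u) * mod_part u j w"
    using j by (simp add: rpart_eq_mod_part mod_part_mult_mod_homogeneous[OF u])
  then show ?thesis by simp
qed

lemma fract_part_ideal_generator:
  fixes r :: "int poly"
  assumes u: "u > 0" and r0: "poly r 0 \<noteq> 0"
  obtains m where "generated_ideal (\<lambda>j. fract_poly (rpart u j r)) {..<u} = {x. m dvd x}"
    "mod_homogeneous u 0 m"
proof -
  define R where "R j = fract_poly (rpart u j r)" for j
  have R: "mod_homogeneous u j (R j)" for j
    by (simp add: R_def mod_homogeneous_def coeff_map_poly rpart_eq_mod_part coeff_mod_part)
  obtain m where m: "generated_ideal R {..<u} = {x. m dvd x}"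
    using is_ideal_principal[OF is_ideal_generated_ideal] by blast
  have "m dvd mod_part u (degree m mod u) m"
    using generated_ideal_mod_part[OF u _ R] u m by simp
  then have hom: "mod_homogeneous u (degree m mod u) m"
    by (rule mod_homogeneous_if_dvd_mod_part)
  have "m dvd R 0" using generator_in_generated_ideal[of "{..<u}" 0 R] u m by simp
  moreover have "coeff (R 0) 0 \<noteq> 0"
    using r0 by (simp add: R_def coeff_map_poly rpart_eq_mod_part coeff_mod_part poly_0_coeff_0)
  ultimately have "coeff m 0 \<noteq> 0" by (auto simp: coeff_mult_0 elim!: dvdE)
  with hom have "mod_homogeneous u 0 m" by (metis mod_0 mod_homogeneous_def)
  with m show ?thesis unfolding R_def by (rule that)
qed

lemma nonzero_const_in_part_ideal:
  fixes r :: "int poly"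
  assumes u: "u > 0" and r0: "poly r 0 \<noteq> 0"
    and no_s: "\<nexists>s. degree s \<noteq> 0 \<and> pcompose s (monom 1 u) dvd r"
  obtains c where "c \<noteq> 0" "[:c:] \<in> part_ideal u r"
proof -
  define R where "R j = fract_poly (rpart u j r)" for j
  obtain m where I: "generated_ideal R {..<u} = {x. m dvd x}" and hom: "mod_homogeneous u 0 m"
    unfolding R_def using fract_part_ideal_generator[OF u r0] .
  have "fract_poly r = (\<Sum>j<u. R j)"
    by (simp add: R_def rpart_eq_mod_part sum_mod_part[OF u] flip: fract_poly_sum)
  also have "m dvd \<dots>"
    using I generator_in_generated_ideal[of "{..<u}" _ R] by (auto intro!: dvd_sum)
  finally have m_dvd_r: "m dvd fract_poly r" .
  moreover have "r \<noteq> 0" using r0 by auto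
  ultimately have "m \<noteq> 0" by auto
  show ?thesis
  proof (cases "degree m = 0")
    case True
    have "m \<in> generated_ideal R {..<u}" using I by simp
    then obtain d y where "d \<noteq> 0" "y \<in> part_ideal u r" "smult (to_fract d) m = fract_poly y"
      unfolding R_def part_ideal_eq_generated_ideal
      by (rule generated_ideal_fract_poly_clear_denominators[OF finite_lessThan])
    moreover from this(3) have "degree y = 0" "y \<noteq> 0"
      using True \<open>d \<noteq> 0\<close> \<open>m \<noteq> 0\<close> by (auto simp: degree_map_poly dest: arg_cong[of _ _ degree])
    ultimately show ?thesis by (metis degree_0_id pCons_eq_0_iff that)
  next
    case False
    obtain a p where m: "m = smult a (fract_poly p)" "content p = 1"
      by (rule content_decompose_fract)
    with \<open>m \<noteq> 0\<close> have "a \<noteq> 0" by auto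
    have "fract_poly p dvd m" unfolding m(1) by (rule dvd_smult) simp
    then have "p dvd r" using m_dvd_r m(2) by (blast intro: fract_poly_dvdD dvd_trans)
    moreover have "mod_homogeneous u 0 p"
      using hom \<open>a \<noteq> 0\<close> by (simp add: m(1) mod_homogeneous_def coeff_map_poly)
    then obtain s where s: "p = pcompose s (monom 1 u)"
      using mod_homogeneous_0_iff_pcompose_monom[OF u] by blast
    moreover have "degree s \<noteq> 0"
      using False \<open>a \<noteq> 0\<close> by (simp add: m(1) s degree_map_poly degree_pcompose degree_monom_eq)
    ultimately show ?thesis using no_s by blast
  qed
qed

lemma part_ideal_nonzero_const_iff:
  fixes r :: "int poly"
  assumes u: "u > 0"
  shows "(\<exists>c. c \<noteq> 0 \<and> [:c:] \<in> part_ideal u r) \<longleftrightarrow>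
    poly r 0 \<noteq> 0 \<and> (\<nexists>s. degree s \<noteq> 0 \<and> pcompose s (monom 1 u) dvd r)"
proof
  assume "\<exists>c. c \<noteq> 0 \<and> [:c:] \<in> part_ideal u r"
  then obtain c where c: "c \<noteq> 0" "[:c:] \<in> part_ideal u r" by blast
  show "poly r 0 \<noteq> 0 \<and> (\<nexists>s. degree s \<noteq> 0 \<and> pcompose s (monom 1 u) dvd r)"
  proof (intro conjI notI)
    assume "poly r 0 = 0"
    with c show False
      using part_ideal_const_eq_0_if_common_divisor[of "[:0, 1:]" u r c] x_dvd_rpart by simp
  next
    assume "\<exists>s. degree s \<noteq> 0 \<and> pcompose s (monom 1 u) dvd r"
    then obtain s where s: "degree s \<noteq> 0" "pcompose s (monom 1 u) dvd r" by blast
    then have "degree (pcompose s (monom 1 u)) \<noteq> 0"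
      using u by (simp add: degree_pcompose degree_monom_eq)
    moreover have "\<And>j. j < u \<Longrightarrow> pcompose s (monom 1 u) dvd rpart u j r"
      by (rule pcompose_monom_dvd_rpart[OF u _ s(2)])
    ultimately show False using c part_ideal_const_eq_0_if_common_divisor by blast
  qed
qed (use nonzero_const_in_part_ideal[OF u] in blast)

lemma is_ideal_part_ideal: "is_ideal (part_ideal u r)"
  by (simp add: part_ideal_eq_generated_ideal is_ideal_generated_ideal)

lemma is_ideal_cong_ideal: "is_ideal (cong_ideal r)"
proof -
  note part = is_ideal_part_ideal[of _ r]
  have "[:0:] \<in> part_ideal u r" for u
    using part by (simp add: is_ideal_def)
  moreover have "[:x + y:] \<in> part_ideal u r"
    if "[:x:] \<in> part_ideal u r" "[:y:] \<in> part_ideal u r" for x y u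
  proof -
    have "[:x:] + [:y:] \<in> part_ideal u r" using part[of u] that unfolding is_ideal_def by blast
    then show ?thesis by simp
  qed
  moreover have "[:z * x:] \<in> part_ideal u r" if "[:x:] \<in> part_ideal u r" for x z u
  proof -
    have "[:z:] * [:x:] \<in> part_ideal u r" using part[of u] that unfolding is_ideal_def by blast
    then show ?thesis by (simp add: mult.commute)
  qed
  ultimately show ?thesis unfolding is_ideal_def cong_ideal_def by blast
qed

lemma Cong_eq_0_iff: "Cong r = 0 \<longleftrightarrow> r = 0 \<or> cong_ideal r = {0}"
proof (cases "r = 0")
  case False
  obtain g where "cong_ideal r = {x. g dvd x}"
    using is_ideal_principal[OF is_ideal_cong_ideal] .
  then have gen: "cong_ideal r = {x. \<bar>g\<bar> dvd x}" by simp
  have "Cong r = (THE g. 0 \<le> g \<and> cong_ideal r = {x. g dvd x})"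
    using False by (simp add: Cong_def)
  also have "\<dots> = \<bar>g\<bar>"
  proof (rule the_equality)
    fix g' assume g': "0 \<le> g' \<and> cong_ideal r = {x. g' dvd x}"
    have "\<bar>g\<bar> \<in> cong_ideal r" unfolding gen by simp
    then have "g' dvd \<bar>g\<bar>" using g' by simp
    have "g' \<in> cong_ideal r" using g' by simp
    then have "\<bar>g\<bar> dvd g'" unfolding gen by simp
    with g' \<open>g' dvd \<bar>g\<bar>\<close> show "g' = \<bar>g\<bar>" by (simp add: zdvd_antisym_nonneg)
  qed (use gen in simp)
  finally have "Cong r = \<bar>g\<bar>" .
  moreover have "{x. \<bar>g\<bar> dvd x} = {0} \<longleftrightarrow> g = 0"
  proof
    assume "{x. \<bar>g\<bar> dvd x} = {0}"
    then have "\<bar>g\<bar> \<in> {0}" by (metis dvd_refl mem_Collect_eq)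
    then show "g = 0" by simp
  qed simp
  ultimately show ?thesis using False gen by simp
qed (simp add: Cong_def)

lemma cong_ideal_eq_0_iff_part_ideal:
  "cong_ideal r = {0} \<longleftrightarrow> (\<exists>u\<in>{2..degree r + 1}. \<nexists>c. c \<noteq> 0 \<and> [:c:] \<in> part_ideal u r)"
proof
  let ?U = "{2..degree r + 1}"
  assume "cong_ideal r = {0}"
  show "\<exists>u\<in>?U. \<nexists>c. c \<noteq> 0 \<and> [:c:] \<in> part_ideal u r"
  proof (rule ccontr)
    assume "\<not> ?thesis"
    then obtain c where c: "\<And>u. u \<in> ?U \<Longrightarrow> c u \<noteq> 0 \<and> [:c u:] \<in> part_ideal u r" by metis
    have "[:\<Prod>u\<in>?U. c u:] \<in> part_ideal u r" if "u \<in> ?U" for u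
    proof -
      have "c u dvd (\<Prod>u\<in>?U. c u)" using that by (intro dvd_prodI) simp_all
      then obtain k where "(\<Prod>u\<in>?U. c u) = c u * k" ..
      then have "[:\<Prod>u\<in>?U. c u:] = [:k:] * [:c u:]" by simp
      then show ?thesis
        using c[OF that] is_ideal_part_ideal unfolding is_ideal_def by metis
    qed
    then have "(\<Prod>u\<in>?U. c u) \<in> cong_ideal r" by (simp add: cong_ideal_def)
    moreover have "(\<Prod>u\<in>?U. c u) \<noteq> 0" using c by (subst prod_zero_iff) auto
    ultimately show False using \<open>cong_ideal r = {0}\<close> by simp
  qed
next
  assume "\<exists>u\<in>{2..degree r + 1}. \<nexists>c. c \<noteq> 0 \<and> [:c:] \<in> part_ideal u r"
  then have "c = 0" if "c \<in> cong_ideal r" for c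
    using that unfolding cong_ideal_def by blast
  moreover have "0 \<in> cong_ideal r" using is_ideal_cong_ideal by (simp add: is_ideal_def)
  ultimately show "cong_ideal r = {0}" by blast
qed

lemma pcompose_monom_dvd_degree_le:
  fixes r s :: "'a::idom poly"
  assumes "r \<noteq> 0" "degree s \<noteq> 0" "pcompose s (monom 1 u) dvd r"
  shows "u \<le> degree r"
proof -
  have "u \<le> degree (pcompose s (monom 1 u))"
    using assms(2) by (simp add: degree_pcompose degree_monom_eq)
  also have "\<dots> \<le> degree r" using assms(1,3) by (rule dvd_imp_degree_le[rotated])
  finally show ?thesis .
qed

lemma exists_ge_2_iff_shift: "(\<exists>u\<ge>2. P u) \<longleftrightarrow> (\<exists>u::nat\<ge>1. P (u + 1))"
proof
  assume "\<exists>u\<ge>2. P u"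
  then obtain u where "u \<ge> 2" "P u" by blast
  then show "\<exists>u\<ge>1. P (u + 1)" by (intro exI[of _ "u - 1"]) simp
next
  assume "\<exists>u\<ge>1. P (u + 1)"
  then obtain u where "u \<ge> 1" "P (u + 1)" by blast
  then show "\<exists>u\<ge>2. P u" by (intro exI[of _ "u + 1"]) simp
qed

lemma cong_ideal_eq_0_iff:
  fixes r :: "int poly"
  assumes "r \<noteq> 0"
  shows "cong_ideal r = {0} \<longleftrightarrow>
    poly r 0 = 0 \<or> (\<exists>u\<ge>2. \<exists>s. degree s \<noteq> 0 \<and> pcompose s (monom 1 u) dvd r)"
proof -
  have "cong_ideal r = {0} \<longleftrightarrow> (\<exists>u\<in>{2..degree r + 1}. poly r 0 = 0 \<or>
      (\<exists>s. degree s \<noteq> 0 \<and> pcompose s (monom 1 u) dvd r))"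
    unfolding cong_ideal_eq_0_iff_part_ideal
    by (intro bex_cong refl) (simp add: part_ideal_nonzero_const_iff)
  also have "\<dots> \<longleftrightarrow> poly r 0 = 0 \<or> (\<exists>u\<ge>2. \<exists>s. degree s \<noteq> 0 \<and> pcompose s (monom 1 u) dvd r)"
  proof (intro iffI; elim disjE exE conjE bexE)
    assume "poly r 0 = 0"
    then have "degree r \<noteq> 0" using assms degree_0_id[of r] by (auto simp: poly_0_coeff_0)
    with \<open>poly r 0 = 0\<close> show "\<exists>u\<in>{2..degree r + 1}. poly r 0 = 0 \<or>
        (\<exists>s. degree s \<noteq> 0 \<and> pcompose s (monom 1 u) dvd r)"
      by (intro bexI[of _ 2]) auto
  next
    fix u s assume "u \<ge> 2" "degree s \<noteq> 0" "pcompose s (monom 1 u) dvd r"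
    moreover from this have "u \<le> degree r" using assms by (intro pcompose_monom_dvd_degree_le)
    ultimately show "\<exists>u\<in>{2..degree r + 1}. poly r 0 = 0 \<or>
        (\<exists>s. degree s \<noteq> 0 \<and> pcompose s (monom 1 u) dvd r)"
      by (intro bexI[of _ u]) auto
  qed auto
  finally show ?thesis .
qed

theorem proposition3p4:
  fixes r :: "int poly"
  shows "Cong r = 0 \<longleftrightarrow>
    (poly r 0 = 0 \<or>
     (\<exists>u::nat. u \<ge> 1 \<and> (\<exists>s::int poly. degree s \<noteq> 0 \<and>
        pcompose s (monom 1 (u + 1)) dvd r)))"
proof (cases "r = 0")
  case False
  then have "Cong r = 0 \<longleftrightarrow>
      poly r 0 = 0 \<or> (\<exists>u\<ge>2. \<exists>s. degree s \<noteq> 0 \<and> pcompose s (monom 1 u) dvd r)"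
    by (simp add: Cong_eq_0_iff cong_ideal_eq_0_iff)
  then show ?thesis by (simp add: exists_ge_2_iff_shift)
qed (simp add: Cong_def)

end
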